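(* Let $n\ge 3$ and let $m,a,b,c$ be integers with $m\ge 0$, $a\ge1$, $b\ge 1$, $c\ge 1$ and $a+b+c=n$. Put $$V=(s_{a+b+1}s_{a+b+2}\cdots s_{n-1})\,(s_ns_{n-1}\cdots s_{a+b+1})\,(s_as_{a-1}\cdots s_2),$$ $$W=(s_{a+b+1}s_{a+b+2}\cdots s_{n-1})\,(s_ns_{n-1}\cdots s_{a+b+1})\,(s_1s_2\cdots s_{a+b-1})\,(s_{a+b}s_{a+b-1}\cdots s_2s_1).$$ Then $$((m+1)^a,m^b,(m+1)^c)=W^m V(\alpha_1).$$ In particular $((m+1)^a,m^b,(m+1)^c)$ is a positive real root.
   Context: Notation: $(x^a,y^b,z^c)$ denotes the vector in $\mathbb{Z}^n$ whose first $a$ entries equal $x$, next $b$ entries equal $y$ and last $c$ entries equal $z$. The simple roots $\alpha_1,\dots,\alpha_n$ are the standard basis vectors of $\mathbb{Z}^n$. For $1\le i\le n$ the simple reflection $s_i:\mathbb{Z}^n\to\mathbb{Z}^n$ is the linear map which changes only the $i$-th coordinate of $v=(v^1,\dots,v^n)$, replacing $v^i$ by $v^{i-1}+v^{i+1}-v^i$, with indices modulo $n$ in $\{1,\dots,n\}$. Products are compositions of maps (the rightmost factor acts first). Convention: an ascending product $s_js_{j+1}\cdots s_l$ with $l<j$ and a descending product $s_ls_{l-1}\cdots s_j$ with $l<j$ are both the identity map. A real root is a vector $s_{i_1}\cdots s_{i_j}(\alpha_k)$; it is positive if its entries are nonnegative. *)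

theory Defs
  imports Main
begin

text \<open>Vectors in Z^n are int lists of length n; coordinate i (1 <= i <= n) is v ! (i - 1).\<close>

definition cprev :: "nat \<Rightarrow> nat \<Rightarrow> nat" where
  "cprev n i = (if i = 1 then n else i - 1)"

definition cnext :: "nat \<Rightarrow> nat \<Rightarrow> nat" where
  "cnext n i = (if i = n then 1 else i + 1)"

definition sref :: "nat \<Rightarrow> nat \<Rightarrow> int list \<Rightarrow> int list" where
  "sref n i v = v[i - 1 := v ! (cprev n i - 1) + v ! (cnext n i - 1) - v ! (i - 1)]"

text \<open>Product s_{i_1} ... s_{i_k} of a word (composition, rightmost acts first).\<close>
definition sword :: "nat \<Rightarrow> nat list \<Rightarrow> int list \<Rightarrow> int list" where
  "sword n is = foldr (\<lambda>i f. sref n i \<circ> f) is id"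

definition asc :: "nat \<Rightarrow> nat \<Rightarrow> nat \<Rightarrow> int list \<Rightarrow> int list" where
  "asc n j l = sword n [j..<Suc l]"

definition desc :: "nat \<Rightarrow> nat \<Rightarrow> nat \<Rightarrow> int list \<Rightarrow> int list" where
  "desc n l j = sword n (rev [j..<Suc l])"

definition sroot :: "nat \<Rightarrow> nat \<Rightarrow> int list" where
  "sroot n k = map (\<lambda>j. if j = k then 1 else 0) [1..<Suc n]"

definition real_root :: "nat \<Rightarrow> int list \<Rightarrow> bool" where
  "real_root n v \<longleftrightarrow> (\<exists>is k. set is \<subseteq> {1..n} \<and> k \<in> {1..n} \<and> v = sword n is (sroot n k))"

definition positive_real_root :: "nat \<Rightarrow> int list \<Rightarrow> bool" where
  "positive_real_root n v \<longleftrightarrow> real_root n v \<and> (\<forall>x \<in> set v. 0 \<le> x)"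

end

theory Submission imports Defs begin

text \<open>A descending product
  \<open>s\<^sub>l \<cdots> s\<^sub>j\<close> shifts the block \<open>j..l\<close> one place to the left and adds the constant
  \<open>v\<^sub>j\<^sub>-\<^sub>1 - v\<^sub>j\<close> to it; an ascending product \<open>s\<^sub>j \<cdots> s\<^sub>l\<close> shifts it one place to the right
  and adds \<open>v\<^sub>l\<^sub>+\<^sub>1 - v\<^sub>l\<close>. With these closed forms, \<open>V\<close> carries \<open>\<alpha>\<^sub>1\<close> to
  \<open>(1\<^sup>a, 0\<^sup>b, 1\<^sup>c)\<close> and \<open>W\<close> adds the all-ones vector to every vector of the shape
  \<open>((k+1)\<^sup>a, k\<^sup>b, (k+1)\<^sup>c)\<close>; the claim follows by induction on \<open>m\<close>, and positivity
  and the real-root property are then immediate.\<close>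

definition vec_of :: "nat \<Rightarrow> (nat \<Rightarrow> int) \<Rightarrow> int list" where
  "vec_of n f = map f [1..<Suc n]"

lemma length_vec_of [simp]: "length (vec_of n f) = n"
  by (simp add: vec_of_def)

lemma nth_vec_of: "p < n \<Longrightarrow> vec_of n f ! p = f (Suc p)"
  by (simp add: vec_of_def del: upt_Suc)

lemma vec_of_cong: "(\<And>i. 1 \<le> i \<Longrightarrow> i \<le> n \<Longrightarrow> f i = g i) \<Longrightarrow> vec_of n f = vec_of n g"
  unfolding vec_of_def by (rule map_cong) auto

lemma sword_Nil [simp]: "sword n [] = id"
  by (simp add: sword_def)

lemma sword_Cons: "sword n (i # is) = sref n i \<circ> sword n is"
  by (simp add: sword_def)

lemma sword_append: "sword n (is @ js) = sword n is \<circ> sword n js"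
  by (induction "is") (auto simp: sword_Cons)

lemma funpow_sword: "sword n is ^^ k = sword n (concat (replicate k is))"
  by (induction k) (simp_all add: sword_append)

lemma real_root_sword_sroot:
  "set is \<subseteq> {1..n} \<Longrightarrow> k \<in> {1..n} \<Longrightarrow> real_root n (sword n is (sroot n k))"
  unfolding real_root_def by blast

lemma sref_vec_of:
  assumes "1 \<le> i" "i \<le> n"
  shows "sref n i (vec_of n f) = vec_of n (f(i := f (cprev n i) + f (cnext n i) - f i))"
proof -
  have "1 \<le> cprev n i" "cprev n i \<le> n" "1 \<le> cnext n i" "cnext n i \<le> n"
    using assms by (auto simp: cprev_def cnext_def)
  then have "vec_of n f ! (cprev n i - 1) + vec_of n f ! (cnext n i - 1) - vec_of n f ! (i - 1)
      = f (cprev n i) + f (cnext n i) - f i"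
    using assms by (simp add: nth_vec_of)
  then show ?thesis
    unfolding sref_def using assms
    by (intro nth_equalityI) (auto simp: nth_list_update nth_vec_of)
qed

text \<open>The exclusion of \<open>j = 1, l = n\<close> matters: there the block wraps around the cycle.\<close>

lemma desc_vec_of:
  assumes "1 \<le> j" "l \<le> n" "\<not> (j = 1 \<and> l = n)"
  shows "desc n l j (vec_of n f)
           = vec_of n (\<lambda>i. if j \<le> i \<and> i \<le> l then f (cnext n i) + f (cprev n j) - f j else f i)"
  using assms
proof (induction l)
  case 0
  then show ?case by (auto simp: desc_def intro!: vec_of_cong)
next
  case (Suc l)
  show ?case
  proof (cases "Suc l < j")
    case True
    then show ?thesis by (auto simp: desc_def intro!: vec_of_cong)
  next
    case False
    then have split: "desc n (Suc l) j = sref n (Suc l) \<circ> desc n l j"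
      by (simp add: desc_def sword_Cons)
    have IH: "desc n l j (vec_of n f)
        = vec_of n (\<lambda>i. if j \<le> i \<and> i \<le> l then f (cnext n i) + f (cprev n j) - f j else f i)"
      using Suc by simp
    show ?thesis
      unfolding split comp_apply IH using Suc.prems False
      by (subst sref_vec_of; (intro vec_of_cong)?)
         (cases "j = Suc l"; auto simp: cprev_def cnext_def)+
  qed
qed

lemma asc_vec_of:
  assumes "1 \<le> j" "l < n"
  shows "asc n j l (vec_of n f)
           = vec_of n (\<lambda>i. if j \<le> i \<and> i \<le> l then f (cprev n i) + f (Suc l) - f l else f i)"
proof (cases "j \<le> Suc l")
  case False
  then show ?thesis by (auto simp: asc_def intro!: vec_of_cong)
next
  case True
  then show ?thesis using assms(1)
  proof (induction j rule: inc_induct)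
    case base
    then show ?case by (auto simp: asc_def intro!: vec_of_cong)
  next
    case (step k)
    then have "asc n k l = sref n k \<circ> asc n (Suc k) l"
      by (simp add: asc_def upt_conv_Cons sword_Cons del: upt_Suc)
    with step assms show ?case
      by (cases "k = l") (auto simp: sref_vec_of cprev_def cnext_def intro!: vec_of_cong)
  qed
qed

context
  fixes n a b c :: nat
  assumes a: "1 \<le> a" and b: "1 \<le> b" and c: "1 \<le> c" and n: "a + b + c = n"
begin

definition block_vec :: "nat \<Rightarrow> int list" where
  "block_vec k = vec_of n (\<lambda>i. int k + (if i \<le> a \<or> a + b < i then 1 else 0))"

lemma block_vec_eq_replicate:
  "block_vec k = replicate a (int k + 1) @ replicate b (int k) @ replicate c (int k + 1)"
  unfolding block_vec_def using a b c n
  by (intro nth_equalityI) (auto simp: nth_vec_of nth_append)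

lemma asc_desc_block_vec:
  "(asc n (a+b+1) (n-1) \<circ> desc n n (a+b+1)) (vec_of n (\<lambda>i. int k + (if i \<le> a then 1 else 0)))
     = block_vec k"
proof -
  have "desc n n (a+b+1) (vec_of n (\<lambda>i. int k + (if i \<le> a then 1 else 0)))
          = vec_of n (\<lambda>i. int k + (if i \<le> a \<or> i = n then 1 else 0))"
    using a b c n by (subst desc_vec_of) (auto simp: cprev_def cnext_def intro!: vec_of_cong)
  also have "asc n (a+b+1) (n-1) \<dots> = block_vec k"
    unfolding block_vec_def using a b c n
    by (subst asc_vec_of) (auto simp: cprev_def cnext_def intro!: vec_of_cong)
  finally show ?thesis by simp
qed

lemma V_sroot_1:
  "(asc n (a+b+1) (n-1) \<circ> desc n n (a+b+1) \<circ> desc n a 2) (sroot n 1) = block_vec 0"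
proof -
  have "sroot n 1 = vec_of n (\<lambda>i. if i = 1 then 1 else 0)"
    by (simp add: sroot_def vec_of_def)
  also have "desc n a 2 \<dots> = vec_of n (\<lambda>i. int 0 + (if i \<le> a then 1 else 0))"
    using a b c n by (subst desc_vec_of) (auto simp: cprev_def cnext_def intro!: vec_of_cong)
  finally show ?thesis
    using asc_desc_block_vec[of 0] by simp
qed

lemma W_block_vec:
  "(asc n (a+b+1) (n-1) \<circ> desc n n (a+b+1) \<circ> asc n 1 (a+b-1) \<circ> desc n (a+b) 1) (block_vec k)
     = block_vec (Suc k)"
proof -
  have "desc n (a+b) 1 (block_vec k)
          = vec_of n (\<lambda>i. int k + (if i < a \<or> a + b \<le> i then 1 else 0))"
    unfolding block_vec_def using a b c n
    by (subst desc_vec_of) (auto simp: cprev_def cnext_def intro!: vec_of_cong)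
  also have "asc n 1 (a+b-1) \<dots> = vec_of n (\<lambda>i. int (Suc k) + (if i \<le> a then 1 else 0))"
    using a b c n by (subst asc_vec_of) (auto simp: cprev_def cnext_def intro!: vec_of_cong)
  finally show ?thesis
    using asc_desc_block_vec[of "Suc k"] by simp
qed

end

theorem theorem4p1:
  fixes n m a b c :: nat
  assumes "n \<ge> 3" and "a \<ge> 1" and "b \<ge> 1" and "c \<ge> 1" and "a + b + c = n"
  defines "V \<equiv> asc n (a+b+1) (n-1) \<circ> desc n n (a+b+1) \<circ> desc n a 2"
      and "W \<equiv> asc n (a+b+1) (n-1) \<circ> desc n n (a+b+1) \<circ> asc n 1 (a+b-1) \<circ> desc n (a+b) 1"
  shows "replicate a (int m + 1) @ replicate b (int m) @ replicate c (int m + 1)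
           = (W ^^ m) (V (sroot n 1)) \<and>
         positive_real_root n (replicate a (int m + 1) @ replicate b (int m) @ replicate c (int m + 1))"
proof -
  note hyps = assms(2-5)
  have orbit: "(W ^^ k) (V (sroot n 1)) = block_vec n a b k" for k
    by (induction k) (use hyps V_sroot_1 W_block_vec in \<open>simp_all add: V_def W_def\<close>)
  define wV where "wV = [a+b+1..<n] @ rev [a+b+1..<Suc n] @ rev [2..<Suc a]"
  define wW where "wW = [a+b+1..<n] @ rev [a+b+1..<Suc n] @ [1..<a+b] @ rev [1..<Suc (a+b)]"
  have "V = sword n wV" "W = sword n wW"
    unfolding V_def W_def wV_def wW_def asc_def desc_def sword_append
    using hyps by (simp_all add: comp_assoc)
  then have "(W ^^ m) (V (sroot n 1)) = sword n (concat (replicate m wW) @ wV) (sroot n 1)"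
    by (simp add: funpow_sword sword_append)
  moreover have "set (concat (replicate m wW) @ wV) \<subseteq> {1..n}"
    using hyps by (auto simp: wW_def wV_def)
  ultimately have "real_root n ((W ^^ m) (V (sroot n 1)))"
    using hyps by (simp add: real_root_sword_sroot)
  then show ?thesis
    using orbit[of m] block_vec_eq_replicate[OF hyps, of m]
    by (auto simp: positive_real_root_def)
qed

end
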